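(* Let $p$ be a prime, $n>1$, $\alpha_0,\dots,\alpha_{n-1}\in\mathbb{L}_p$, and let $A\in\mathbb{L}_p^{n\times n}$ be the matrix whose transpose $A^T$ is the companion matrix of $-\alpha_0-\alpha_1t-\dots-\alpha_{n-1}t^{n-1}+t^n$. Then the linear cellular automaton over $(\mathbb{Z}/p\mathbb{Z})^n$ with associated matrix $A$ is positively expansive if and only if the linear cellular automaton over $(\mathbb{Z}/p\mathbb{Z})^n$ with associated matrix $A^T$ is positively expansive.
   Context: $\mathbb{L}_p=\mathbb{Z}/p\mathbb{Z}[X,X^{-1}]$. The companion matrix of a monic polynomial $\beta_0+\dots+\beta_{n-1}t^{n-1}+t^n$ is the $n\times n$ matrix with ones on the subdiagonal, last column $(-\beta_0,\dots,-\beta_{n-1})^T$, and zeros elsewhere. The linear cellular automaton over $(\mathbb{Z}/p\mathbb{Z})^n$ with associated matrix $\sum_{j=-r}^rA_jX^{-j}$ ($A_j\in(\mathbb{Z}/p\mathbb{Z})^{n\times n}$) is the map $\mathcal{F}(c)_i=\sum_{j=-r}^rA_jc_{i+j}$ on $((\mathbb{Z}/p\mathbb{Z})^n)^{\mathbb{Z}}$ with metric $d(c,c')=2^{-\min\{|j|:c_j\neq c'_j\}}$ ($d(c,c)=0$); it is positively expansive if there is $\varepsilon>0$ such that for all $c\neq c'$ some $\ell\in\mathbb{N}$ gives $d(\mathcal{F}^\ell(c),\mathcal{F}^\ell(c'))\geq\varepsilon$. *)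

theory Defs
  imports Complex_Main "HOL-Computational_Algebra.Primes"
begin

text \<open>Elements of L_p = Z/pZ[X,X^-1] are represented as coefficient functions
  a :: int => int (a m = coefficient of X^m), with values in {0..<p} and finite support.\<close>

type_synonym laurent = "int \<Rightarrow> int"

definition laurent_poly :: "int \<Rightarrow> laurent \<Rightarrow> bool" where
  "laurent_poly p a \<longleftrightarrow> (\<forall>m. 0 \<le> a m \<and> a m < p) \<and> finite {m. a m \<noteq> 0}"

definition lp_zero :: laurent where "lp_zero = (\<lambda>m. 0)"
definition lp_one :: laurent where "lp_one = (\<lambda>m. if m = 0 then 1 else 0)"
definition lp_neg :: "int \<Rightarrow> laurent \<Rightarrow> laurent" where
  "lp_neg p a = (\<lambda>m. (- a m) mod p)"

text \<open>Companion matrix (n x n, indices 0..n-1) of the monic polynomial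
  beta_0 + ... + beta_{n-1} t^{n-1} + t^n: ones on the subdiagonal,
  last column (-beta_0, ..., -beta_{n-1})^T, zeros elsewhere.\<close>

definition companion :: "int \<Rightarrow> nat \<Rightarrow> (nat \<Rightarrow> laurent) \<Rightarrow> nat \<Rightarrow> nat \<Rightarrow> laurent" where
  "companion p n \<beta> k l =
     (if l = n - 1 then lp_neg p (\<beta> k) else if k = l + 1 then lp_one else lp_zero)"

text \<open>Configurations in ((Z/pZ)^n)^Z: c i k is the k-th component (k < n) of cell i.\<close>

definition config :: "int \<Rightarrow> nat \<Rightarrow> (int \<Rightarrow> nat \<Rightarrow> int) \<Rightarrow> bool" where
  "config p n c \<longleftrightarrow> (\<forall>i k. (k < n \<longrightarrow> 0 \<le> c i k \<and> c i k < p) \<and> (n \<le> k \<longrightarrow> c i k = 0))"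

text \<open>The linear CA with associated matrix M = sum_j A_j X^(-j), i.e. (A_j)_{k,l} is the
  coefficient of X^(-j) in M k l:  F(c)_i = sum_j A_j c_(i+j).\<close>

definition lca :: "int \<Rightarrow> nat \<Rightarrow> (nat \<Rightarrow> nat \<Rightarrow> laurent) \<Rightarrow> (int \<Rightarrow> nat \<Rightarrow> int) \<Rightarrow> (int \<Rightarrow> nat \<Rightarrow> int)" where
  "lca p n M c = (\<lambda>i k. if k < n then
      (\<Sum>l<n. \<Sum>j\<in>{j. M k l (- j) \<noteq> 0}. M k l (- j) * c (i + j) l) mod p else 0)"

definition cdist :: "(int \<Rightarrow> nat \<Rightarrow> int) \<Rightarrow> (int \<Rightarrow> nat \<Rightarrow> int) \<Rightarrow> real" where
  "cdist c c' = (if c = c' then 0 else (1/2) ^ (LEAST m. \<exists>j. nat \<bar>j\<bar> = m \<and> c j \<noteq> c' j))"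

definition pos_expansive :: "int \<Rightarrow> nat \<Rightarrow> (nat \<Rightarrow> nat \<Rightarrow> laurent) \<Rightarrow> bool" where
  "pos_expansive p n M \<longleftrightarrow> (\<exists>\<epsilon>>0. \<forall>c c'. config p n c \<and> config p n c' \<and> c \<noteq> c' \<longrightarrow>
      (\<exists>t::nat. cdist ((lca p n M ^^ t) c) ((lca p n M ^^ t) c') \<ge> \<epsilon>))"

end

theory Submission
  imports Defs
begin

text \<open>
  Let F and G be the automata of the companion matrix C and of its transpose. On each cell, F
  shifts the coordinates up by one index and adds alpha_k applied to the last coordinate. Hence
  the last coordinates of the first n iterates, Phi(x)_k = (F^k x)_(n-1), determine x through a
  triangular system, whose solution Psi inverts Phi; and the recurrence
  (F^n x)_(n-1) = sum_l alpha_l (F^l x)_(n-1) says that Phi conjugates F to G. Both Phi and Psi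
  are built from finitely many Laurent polynomials, so they have finite radius, and positive
  expansivity pulls back along injective conjugacies of finite radius.
\<close>

definition agree :: "nat \<Rightarrow> (int \<Rightarrow> 'a) \<Rightarrow> (int \<Rightarrow> 'a) \<Rightarrow> bool" where
  "agree m x y \<longleftrightarrow> (\<forall>j. \<bar>j\<bar> \<le> int m \<longrightarrow> x j = y j)"

lemma agree_mono: "agree m x y \<Longrightarrow> m' \<le> m \<Longrightarrow> agree m' x y"
  unfolding agree_def by force

lemma cdist_ge_half_power_iff: "(1/2::real) ^ m \<le> cdist c c' \<longleftrightarrow> \<not> agree m c c'"
proof -
  define L where "L = (LEAST m. \<exists>j. nat \<bar>j\<bar> = m \<and> c j \<noteq> c' j)"
  have "(1/2::real) ^ m \<le> (1/2) ^ L \<longleftrightarrow> L \<le> m"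
    by (rule power_decreasing_iff) auto
  moreover have "L \<le> m \<longleftrightarrow> \<not> agree m c c'" if "c \<noteq> c'"
  proof
    assume "L \<le> m"
    obtain j0 where "c j0 \<noteq> c' j0" using \<open>c \<noteq> c'\<close> by auto
    have "\<exists>j. nat \<bar>j\<bar> = L \<and> c j \<noteq> c' j"
      unfolding L_def by (rule LeastI[of _ "nat \<bar>j0\<bar>"]) (use \<open>c j0 \<noteq> c' j0\<close> in auto)
    then obtain j where "nat \<bar>j\<bar> = L" "c j \<noteq> c' j" by blast
    with \<open>L \<le> m\<close> show "\<not> agree m c c'" unfolding agree_def by auto
  next
    assume "\<not> agree m c c'"
    then obtain j where "\<bar>j\<bar> \<le> int m" "c j \<noteq> c' j" unfolding agree_def by auto
    have "L \<le> nat \<bar>j\<bar>" unfolding L_def by (rule Least_le) (use \<open>c j \<noteq> c' j\<close> in auto)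
    with \<open>\<bar>j\<bar> \<le> int m\<close> show "L \<le> m" by linarith
  qed
  moreover have "\<not> (1/2::real) ^ m \<le> 0" by (simp add: not_le)
  ultimately show ?thesis
    unfolding cdist_def L_def[symmetric] agree_def by (cases "c = c'") auto
qed

definition pos_expansive_on :: "(int \<Rightarrow> 'a) set \<Rightarrow> ((int \<Rightarrow> 'a) \<Rightarrow> int \<Rightarrow> 'a) \<Rightarrow> bool" where
  "pos_expansive_on V F \<longleftrightarrow>
     (\<exists>m. \<forall>c\<in>V. \<forall>c'\<in>V. c \<noteq> c' \<longrightarrow> (\<exists>t. \<not> agree m ((F ^^ t) c) ((F ^^ t) c')))"

lemma pos_expansive_iff_pos_expansive_on:
  "pos_expansive p n M \<longleftrightarrow> pos_expansive_on {c. config p n c} (lca p n M)"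
proof
  assume "pos_expansive p n M"
  then obtain \<epsilon> where "\<epsilon> > 0" and sep: "\<And>c c'. config p n c \<Longrightarrow> config p n c' \<Longrightarrow> c \<noteq> c' \<Longrightarrow>
      \<exists>t. cdist ((lca p n M ^^ t) c) ((lca p n M ^^ t) c') \<ge> \<epsilon>"
    unfolding pos_expansive_def by blast
  obtain m where m: "(1/2::real) ^ m < \<epsilon>"
    using real_arch_pow_inv[OF \<open>\<epsilon> > 0\<close>, of "1/2"] by auto
  have "\<exists>t. \<not> agree m ((lca p n M ^^ t) c) ((lca p n M ^^ t) c')"
    if cc': "config p n c" "config p n c'" "c \<noteq> c'" for c c'
  proof -
    obtain t where "cdist ((lca p n M ^^ t) c) ((lca p n M ^^ t) c') \<ge> \<epsilon>"
      using sep[OF cc'] by blast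
    with m have "(1/2) ^ m \<le> cdist ((lca p n M ^^ t) c) ((lca p n M ^^ t) c')" by linarith
    then show ?thesis unfolding cdist_ge_half_power_iff by blast
  qed
  then show "pos_expansive_on {c. config p n c} (lca p n M)"
    unfolding pos_expansive_on_def by blast
next
  assume "pos_expansive_on {c. config p n c} (lca p n M)"
  then obtain m where "\<forall>c\<in>{c. config p n c}. \<forall>c'\<in>{c. config p n c}. c \<noteq> c' \<longrightarrow>
      (\<exists>t. (1/2) ^ m \<le> cdist ((lca p n M ^^ t) c) ((lca p n M ^^ t) c'))"
    unfolding pos_expansive_on_def cdist_ge_half_power_iff by blast
  moreover have "(1/2::real) ^ m > 0" by simp
  ultimately show "pos_expansive p n M"
    unfolding pos_expansive_def by blast
qed

definition has_radius :: "nat \<Rightarrow> ((int \<Rightarrow> 'a) \<Rightarrow> int \<Rightarrow> 'b) \<Rightarrow> bool" where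
  "has_radius r f \<longleftrightarrow> (\<forall>m x y. agree (m + r) x y \<longrightarrow> agree m (f x) (f y))"

lemma has_radius_funpow:
  fixes f :: "(int \<Rightarrow> 'a) \<Rightarrow> int \<Rightarrow> 'a"
  assumes "has_radius r f"
  shows "has_radius (k * r) (f ^^ k)"
proof (induction k)
  case (Suc k)
  show ?case
    unfolding has_radius_def
  proof (intro allI impI)
    fix m and x y :: "int \<Rightarrow> 'a"
    assume "agree (m + Suc k * r) x y"
    then have "agree ((m + k * r) + r) x y" by (simp add: ac_simps)
    then have "agree (m + k * r) (f x) (f y)" using assms unfolding has_radius_def by blast
    then have "agree m ((f ^^ k) (f x)) ((f ^^ k) (f y))" using Suc.IH unfolding has_radius_def by blast
    then show "agree m ((f ^^ Suc k) x) ((f ^^ Suc k) y)" by (simp add: funpow_swap1)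
  qed
qed (simp add: has_radius_def)

lemma funpow_semiconj:
  assumes "G ` W \<subseteq> W" and "\<forall>x\<in>W. \<Psi> (G x) = F (\<Psi> x)" and "x \<in> W"
  shows "(F ^^ t) (\<Psi> x) = \<Psi> ((G ^^ t) x)"
  using assms(3)
proof (induction t arbitrary: x)
  case (Suc t)
  have "(F ^^ Suc t) (\<Psi> x) = (F ^^ t) (\<Psi> (G x))"
    using assms(2) Suc.prems by (simp only: funpow_Suc_right o_apply)
  also have "\<dots> = \<Psi> ((G ^^ Suc t) x)"
    using Suc assms(1) by (simp add: image_subset_iff funpow_Suc_right del: funpow.simps)
  finally show ?case .
qed simp

lemma pos_expansive_on_pullback:
  assumes F: "pos_expansive_on V F"
    and G: "G ` W \<subseteq> W" and semiconj: "\<forall>x\<in>W. \<Psi> (G x) = F (\<Psi> x)"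
    and \<Psi>: "\<Psi> ` W \<subseteq> V" "inj_on \<Psi> W" "has_radius r \<Psi>"
  shows "pos_expansive_on W G"
proof -
  obtain m where sep: "\<forall>c\<in>V. \<forall>c'\<in>V. c \<noteq> c' \<longrightarrow> (\<exists>t. \<not> agree m ((F ^^ t) c) ((F ^^ t) c'))"
    using F unfolding pos_expansive_on_def by blast
  have "\<exists>t. \<not> agree (m + r) ((G ^^ t) d) ((G ^^ t) d')"
    if dd': "d \<in> W" "d' \<in> W" "d \<noteq> d'" for d d'
  proof -
    have "\<Psi> d \<noteq> \<Psi> d'" using \<Psi>(2) dd' by (meson inj_on_def)
    then obtain t where "\<not> agree m ((F ^^ t) (\<Psi> d)) ((F ^^ t) (\<Psi> d'))"
      using sep \<Psi>(1) dd' by blast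
    then have "\<not> agree m (\<Psi> ((G ^^ t) d)) (\<Psi> ((G ^^ t) d'))"
      unfolding funpow_semiconj[OF G semiconj dd'(1), symmetric] funpow_semiconj[OF G semiconj dd'(2), symmetric] .
    then show ?thesis using \<Psi>(3) unfolding has_radius_def by blast
  qed
  then show ?thesis unfolding pos_expansive_on_def by blast
qed

type_synonym configuration = "int \<Rightarrow> nat \<Rightarrow> int"

definition laurent_act :: "laurent \<Rightarrow> (int \<Rightarrow> int) \<Rightarrow> int \<Rightarrow> int" where
  "laurent_act a u i = (\<Sum>j\<in>{j. a (- j) \<noteq> 0}. a (- j) * u (i + j))"

lemma lca_apply:
  "lca p n M c i k =
     (if k < n then (\<Sum>l<n. laurent_act (M k l) (\<lambda>i. c i l) i) mod p else 0)"
  unfolding lca_def laurent_act_def by simp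

lemma config_lca: "p > 0 \<Longrightarrow> config p n (lca p n M c)"
  unfolding config_def lca_def by auto

lemma laurent_act_lp_one: "laurent_act lp_one u i = u i"
proof -
  have "{j. lp_one (- j) \<noteq> 0} = {0}" unfolding lp_one_def by auto
  then show ?thesis unfolding laurent_act_def lp_one_def by simp
qed

lemma laurent_act_lp_zero: "laurent_act lp_zero u i = 0"
  unfolding laurent_act_def lp_zero_def by simp

lemma lp_neg_lp_neg: "laurent_poly p a \<Longrightarrow> lp_neg p (lp_neg p a) = a"
  unfolding laurent_poly_def lp_neg_def by (auto simp: mod_minus_eq)

definition support_within :: "nat \<Rightarrow> laurent \<Rightarrow> bool" where
  "support_within r a \<longleftrightarrow> (\<forall>m. a m \<noteq> 0 \<longrightarrow> \<bar>m\<bar> \<le> int r)"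

lemma support_within_common:
  fixes \<alpha> :: "nat \<Rightarrow> laurent"
  assumes "\<forall>i<n. laurent_poly p (\<alpha> i)"
  shows "\<exists>r. \<forall>i<n. support_within r (\<alpha> i)"
proof -
  have "finite (\<Union>i<n. {m. \<alpha> i m \<noteq> 0})"
    using assms unfolding laurent_poly_def by (intro finite_UN_I) auto
  then have "finite ((\<lambda>m. nat \<bar>m\<bar>) ` (\<Union>i<n. {m. \<alpha> i m \<noteq> 0}))" by blast
  then obtain r where "\<forall>i<n. \<forall>m. \<alpha> i m \<noteq> 0 \<longrightarrow> nat \<bar>m\<bar> \<le> r"
    unfolding finite_nat_set_iff_bounded_le by blast
  then have "\<forall>i<n. support_within r (\<alpha> i)"
    unfolding support_within_def by (metis int_nat_eq abs_ge_zero of_nat_le_iff)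
  then show ?thesis ..
qed

lemma has_radius_laurent_act: "support_within r a \<Longrightarrow> has_radius r (laurent_act a)"
  unfolding has_radius_def
proof (intro allI impI)
  fix m and u u' :: "int \<Rightarrow> int" assume a: "support_within r a" and "agree (m + r) u u'"
  have "laurent_act a u i = laurent_act a u' i" if "\<bar>i\<bar> \<le> int m" for i
    unfolding laurent_act_def
  proof (rule sum.cong[OF refl])
    fix j assume "j \<in> {j. a (- j) \<noteq> 0}"
    then have "\<bar>j\<bar> \<le> int r" using a unfolding support_within_def by fastforce
    then have "u (i + j) = u' (i + j)"
      using \<open>agree (m + r) u u'\<close> that unfolding agree_def by auto
    then show "a (- j) * u (i + j) = a (- j) * u' (i + j)" by simp
  qed
  then show "agree m (laurent_act a u) (laurent_act a u')" unfolding agree_def by blast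
qed

lemma has_radius_lca:
  assumes "\<forall>k<n. \<forall>l<n. support_within r (M k l)"
  shows "has_radius r (lca p n M)"
  unfolding has_radius_def
proof (intro allI impI)
  fix m and c c' :: configuration assume "agree (m + r) c c'"
  then have "agree (m + r) (\<lambda>i. c i l) (\<lambda>i. c' i l)" for l
    unfolding agree_def by auto
  then have "agree m (laurent_act (M k l) (\<lambda>i. c i l)) (laurent_act (M k l) (\<lambda>i. c' i l))"
    if "k < n" "l < n" for k l
    using has_radius_laurent_act[of r "M k l"] assms that unfolding has_radius_def by blast
  then show "agree m (lca p n M c) (lca p n M c')"
    unfolding agree_def lca_apply by (auto intro!: ext sum.cong)
qed

locale companion_lca =
  fixes p :: int and n :: nat and \<alpha> :: "nat \<Rightarrow> laurent"
  assumes p_gt_1: "p > 1" and n_gt_1: "n > 1" and laurent_poly_\<alpha>: "\<forall>i<n. laurent_poly p (\<alpha> i)"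
begin

definition C :: "nat \<Rightarrow> nat \<Rightarrow> laurent" where
  "C = companion p n (\<lambda>i. lp_neg p (\<alpha> i))"

definition F :: "configuration \<Rightarrow> configuration" where
  "F = lca p n C"

definition G :: "configuration \<Rightarrow> configuration" where
  "G = lca p n (\<lambda>k l. C l k)"

lemma C_last: "k < n \<Longrightarrow> C k (n - 1) = \<alpha> k"
  unfolding C_def companion_def using lp_neg_lp_neg laurent_poly_\<alpha> by simp

lemma C_less: "l < n - 1 \<Longrightarrow> C k l = (if k = l + 1 then lp_one else lp_zero)"
  unfolding C_def companion_def by simp

lemma laurent_act_C_less:
  "l < n - 1 \<Longrightarrow> laurent_act (C k l) u i = (if k = l + 1 then u i else 0)"
  by (simp add: C_less laurent_act_lp_one laurent_act_lp_zero)

lemma sum_lessThan_split_last: "(\<Sum>l<n. f l) = (\<Sum>l<n - 1. f l) + f (n - 1)"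
  using n_gt_1 by (cases n) simp_all

lemma F_apply:
  "F x i k = (if k < n then
     ((if 0 < k then x i (k - 1) else 0) + laurent_act (\<alpha> k) (\<lambda>i. x i (n - 1)) i) mod p else 0)"
proof (cases "k < n")
  case True
  have "(\<Sum>l<n - 1. laurent_act (C k l) (\<lambda>i. x i l) i) = (\<Sum>l<n - 1. if k = l + 1 then x i l else 0)"
    by (simp add: laurent_act_C_less)
  also have "\<dots> = (\<Sum>l<n - 1. if l = k - 1 \<and> 0 < k then x i l else 0)"
    by (rule sum.cong) auto
  also have "\<dots> = (if 0 < k then x i (k - 1) else 0)"
    using True by (simp add: sum.delta) arith
  finally have "(\<Sum>l<n. laurent_act (C k l) (\<lambda>i. x i l) i) =
      (if 0 < k then x i (k - 1) else 0) + laurent_act (\<alpha> k) (\<lambda>i. x i (n - 1)) i"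
    using True by (simp only: sum_lessThan_split_last C_last)
  with True show ?thesis unfolding F_def lca_apply by simp
qed (simp add: F_def lca_apply)

lemma G_apply_less: "k < n - 1 \<Longrightarrow> G y i k = y i (k + 1) mod p"
  by (simp add: G_def lca_apply laurent_act_C_less sum.delta)

lemma G_apply_last: "G y i (n - 1) = (\<Sum>l<n. laurent_act (\<alpha> l) (\<lambda>i. y i l) i) mod p"
proof -
  have "laurent_act (C l (n - 1)) (\<lambda>i. y i l) i = laurent_act (\<alpha> l) (\<lambda>i. y i l) i" if "l < n" for l
    using C_last[OF that] by simp
  then show ?thesis using n_gt_1 unfolding G_def lca_apply by simp
qed

lemma G_apply_ge: "n \<le> k \<Longrightarrow> G y i k = 0"
  by (simp add: G_def lca_apply)

lemma config_F: "config p n (F x)"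
  using config_lca p_gt_1 unfolding F_def by simp

lemma config_G: "config p n (G x)"
  using config_lca p_gt_1 unfolding G_def by simp

lemma config_funpow_F: "config p n x \<Longrightarrow> config p n ((F ^^ k) x)"
  by (cases k) (simp_all add: config_F)

lemma config_mod: "config p n x \<Longrightarrow> k < n \<Longrightarrow> x i k mod p = x i k"
  unfolding config_def by simp

lemma has_radius_F:
  assumes "\<forall>l<n. support_within r (\<alpha> l)"
  shows "has_radius r F"
  unfolding F_def
proof (rule has_radius_lca, intro allI impI)
  fix k l assume "k < n" "l < n"
  then show "support_within r (C k l)"
    using assms C_last[of k] C_less[of l k]
    by (cases "l = n - 1") (auto simp: support_within_def lp_one_def lp_zero_def)
qed

definition orbit_last :: "configuration \<Rightarrow> nat \<Rightarrow> int \<Rightarrow> int" where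
  "orbit_last x q = (\<lambda>i. (F ^^ q) x i (n - 1))"

text \<open>Step q + 1 feeds alpha_(j + 1 + q - K) applied to orbit_last x q into coordinate
  j + 1 + q - K, from where the remaining K - 1 - q steps shift it up to coordinate j.\<close>

lemma funpow_F_apply:
  assumes "config p n x" "j < n"
  shows "(F ^^ K) x i j = ((if K \<le> j then x i (j - K) else 0)
     + (\<Sum>q | q < K \<and> K \<le> j + 1 + q. laurent_act (\<alpha> (j + 1 + q - K)) (orbit_last x q) i)) mod p"
  using assms(2)
proof (induction K arbitrary: j)
  case 0
  then show ?case using config_mod[OF assms(1)] by simp
next
  case (Suc K)
  have "(F ^^ Suc K) x i j =
      ((if 0 < j then (F ^^ K) x i (j - 1) else 0) + laurent_act (\<alpha> j) (orbit_last x K) i) mod p"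
    using Suc.prems unfolding orbit_last_def by (simp add: F_apply)
  also have "\<dots> = ((if Suc K \<le> j then x i (j - Suc K) else 0)
     + (\<Sum>q | q < Suc K \<and> Suc K \<le> j + 1 + q. laurent_act (\<alpha> (j + 1 + q - Suc K)) (orbit_last x q) i)) mod p"
  proof (cases "0 < j")
    case True
    have set: "{q. q < Suc K \<and> Suc K \<le> j + 1 + q} = insert K {q. q < K \<and> K \<le> j - 1 + 1 + q}"
      using True by auto
    have "(\<Sum>q | q < Suc K \<and> Suc K \<le> j + 1 + q. laurent_act (\<alpha> (j + 1 + q - Suc K)) (orbit_last x q) i)
        = laurent_act (\<alpha> j) (orbit_last x K) i
          + (\<Sum>q | q < K \<and> K \<le> j - 1 + 1 + q. laurent_act (\<alpha> (j - 1 + 1 + q - K)) (orbit_last x q) i)"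
      unfolding set using True by simp
    moreover have "(if K \<le> j - 1 then x i (j - 1 - K) else 0) = (if Suc K \<le> j then x i (j - Suc K) else 0)"
      using True by auto
    ultimately show ?thesis
      using True Suc.IH[of "j - 1"] Suc.prems by (simp add: mod_add_left_eq mod_add_right_eq add_ac)
  next
    case False
    then have "{q. q < Suc K \<and> Suc K \<le> j + 1 + q} = {K}" by auto
    with False show ?thesis by simp
  qed
  finally show ?case .
qed

lemma funpow_F_n_last:
  assumes "config p n x"
  shows "(F ^^ n) x i (n - 1) = (\<Sum>l<n. laurent_act (\<alpha> l) (orbit_last x l) i) mod p"
proof -
  have "{q. q < n \<and> n \<le> n - 1 + 1 + q} = {..<n}" using n_gt_1 by auto
  then show ?thesis using funpow_F_apply[OF assms, of "n - 1" n] n_gt_1 by simp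
qed

lemma funpow_F_last:
  assumes "config p n x" "k < n"
  shows "(F ^^ (n - 1 - k)) x i (n - 1) =
    (x i k + (\<Sum>q<n - 1 - k. laurent_act (\<alpha> (k + 1 + q)) (orbit_last x q) i)) mod p"
proof -
  have "{q. q < n - 1 - k \<and> n - 1 - k \<le> n - 1 + 1 + q} = {..<n - 1 - k}" by auto
  moreover have "n - 1 + 1 + q - (n - 1 - k) = k + 1 + q" for q using assms(2) by simp
  ultimately show ?thesis
    using funpow_F_apply[OF assms(1), of "n - 1" "n - 1 - k"] assms(2) n_gt_1 by (simp add: ac_simps)
qed

definition \<Phi> :: "configuration \<Rightarrow> configuration" where
  "\<Phi> x = (\<lambda>i k. if k < n then orbit_last x k i else 0)"

text \<open>Solving funpow_F_last for x i k inverts \<Phi>.\<close>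

definition \<Psi> :: "configuration \<Rightarrow> configuration" where
  "\<Psi> z = (\<lambda>i k. if k < n then
     (z i (n - 1 - k) - (\<Sum>q<n - 1 - k. laurent_act (\<alpha> (k + 1 + q)) (\<lambda>i. z i q) i)) mod p else 0)"

lemma config_\<Phi>: "config p n x \<Longrightarrow> config p n (\<Phi> x)"
  using config_funpow_F n_gt_1 unfolding config_def \<Phi>_def orbit_last_def by auto

lemma config_\<Psi>: "config p n (\<Psi> z)"
  using p_gt_1 unfolding config_def \<Psi>_def by auto

lemma \<Phi>_F:
  assumes "config p n x"
  shows "\<Phi> (F x) = G (\<Phi> x)"
proof (intro ext)
  fix i k
  consider "k < n - 1" | "k = n - 1" | "n \<le> k" by linarith
  then show "\<Phi> (F x) i k = G (\<Phi> x) i k"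
  proof cases
    case 1
    have "G (\<Phi> x) i k = (F ^^ Suc k) x i (n - 1) mod p"
      using 1 by (simp add: G_apply_less \<Phi>_def orbit_last_def)
    also have "\<dots> = (F ^^ Suc k) x i (n - 1)"
      using config_mod[OF config_F] n_gt_1 by simp
    finally show ?thesis using 1 by (simp add: \<Phi>_def orbit_last_def funpow_swap1)
  next
    case 2
    have "(F ^^ n) x = F ((F ^^ (n - 1)) x)" using n_gt_1 by (cases n) simp_all
    then have "\<Phi> (F x) i k = (F ^^ n) x i (n - 1)"
      using 2 n_gt_1 by (simp add: \<Phi>_def orbit_last_def funpow_swap1)
    also have "\<dots> = G (\<Phi> x) i k"
      unfolding funpow_F_n_last[OF assms] 2 G_apply_last by (simp add: \<Phi>_def orbit_last_def)
    finally show ?thesis .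
  next
    case 3
    then show ?thesis by (simp add: G_apply_ge \<Phi>_def)
  qed
qed

lemma \<Phi>_row: "q < n \<Longrightarrow> (\<lambda>i. \<Phi> x i q) = orbit_last x q"
  unfolding \<Phi>_def by simp

lemma \<Psi>_\<Phi>:
  assumes x: "config p n x"
  shows "\<Psi> (\<Phi> x) = x"
proof (intro ext)
  fix i k
  show "\<Psi> (\<Phi> x) i k = x i k"
  proof (cases "k < n")
    case True
    define S where "S = (\<Sum>q<n - 1 - k. laurent_act (\<alpha> (k + 1 + q)) (orbit_last x q) i)"
    have "(\<Sum>q<n - 1 - k. laurent_act (\<alpha> (k + 1 + q)) (\<lambda>i. \<Phi> x i q) i) = S"
      unfolding S_def by (rule sum.cong) (simp_all add: \<Phi>_row)
    then have "\<Psi> (\<Phi> x) i k = ((F ^^ (n - 1 - k)) x i (n - 1) - S) mod p"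
      using True unfolding \<Psi>_def by (simp add: \<Phi>_def orbit_last_def)
    also have "\<dots> = x i k"
      unfolding funpow_F_last[OF x True] S_def[symmetric]
      using config_mod[OF x True] by (simp add: mod_diff_left_eq)
    finally show ?thesis .
  next
    case False
    then show ?thesis using x unfolding \<Psi>_def config_def by simp
  qed
qed

lemma \<Phi>_\<Psi>:
  assumes z: "config p n z"
  shows "\<Phi> (\<Psi> z) = z"
proof -
  define x where "x = \<Psi> z"
  have "orbit_last x K = (\<lambda>i. z i K)" if "K < n" for K
    using that
  proof (induction K rule: less_induct)
    case (less K)
    define k where "k = n - 1 - K"
    have k: "k < n" "n - 1 - k = K" using less.prems unfolding k_def by auto
    show ?case
    proof
      fix i
      define S where "S = (\<Sum>q<K. laurent_act (\<alpha> (k + 1 + q)) (\<lambda>i. z i q) i)"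
      have "orbit_last x K i = (x i k + S) mod p"
        using funpow_F_last[OF config_\<Psi>[of z] k(1), of i] less.IH less.prems
        unfolding orbit_last_def x_def[symmetric] k(2) S_def by auto
      also have "x i k = (z i K - S) mod p"
        using k unfolding x_def \<Psi>_def S_def by simp
      also have "((z i K - S) mod p + S) mod p = z i K"
        using config_mod[OF z less.prems] by (simp add: mod_add_left_eq)
      finally show "orbit_last x K i = z i K" .
    qed
  qed
  then show ?thesis
    using z unfolding x_def[symmetric] \<Phi>_def config_def by (auto intro!: ext)
qed

lemma has_radius_\<Phi>:
  assumes "\<forall>l<n. support_within r (\<alpha> l)"
  shows "has_radius (n * r) \<Phi>"
  unfolding has_radius_def
proof (intro allI impI)
  fix m and x y :: configuration assume xy: "agree (m + n * r) x y"
  have "agree m ((F ^^ k) x) ((F ^^ k) y)" if "k < n" for k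
  proof -
    have "agree (m + k * r) x y" by (rule agree_mono[OF xy]) (use that in simp)
    then show ?thesis
      using has_radius_funpow[OF has_radius_F[OF assms], of k] unfolding has_radius_def by blast
  qed
  then show "agree m (\<Phi> x) (\<Phi> y)" unfolding agree_def \<Phi>_def orbit_last_def by auto
qed

lemma has_radius_\<Psi>:
  assumes "\<forall>l<n. support_within r (\<alpha> l)"
  shows "has_radius r \<Psi>"
  unfolding has_radius_def
proof (intro allI impI)
  fix m and z z' :: configuration assume zz': "agree (m + r) z z'"
  then have "agree (m + r) (\<lambda>i. z i q) (\<lambda>i. z' i q)" for q
    unfolding agree_def by auto
  then have "agree m (laurent_act (\<alpha> l) (\<lambda>i. z i q)) (laurent_act (\<alpha> l) (\<lambda>i. z' i q))"
    if "l < n" for l q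
    using has_radius_laurent_act assms that unfolding has_radius_def by blast
  with zz' show "agree m (\<Psi> z) (\<Psi> z')"
    unfolding agree_def \<Psi>_def by (auto intro!: ext sum.cong)
qed

lemma inj_on_\<Phi>: "inj_on \<Phi> {c. config p n c}"
  by (rule inj_on_inverseI[of _ \<Psi>]) (simp add: \<Psi>_\<Phi>)

lemma inj_on_\<Psi>: "inj_on \<Psi> {c. config p n c}"
  by (rule inj_on_inverseI[of _ \<Phi>]) (simp add: \<Phi>_\<Psi>)

lemma \<Psi>_G:
  assumes "config p n y"
  shows "\<Psi> (G y) = F (\<Psi> y)"
proof -
  have "\<Psi> (G y) = \<Psi> (G (\<Phi> (\<Psi> y)))" using \<Phi>_\<Psi>[OF assms] by simp
  also have "\<dots> = \<Psi> (\<Phi> (F (\<Psi> y)))" using \<Phi>_F[OF config_\<Psi>] by simp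
  also have "\<dots> = F (\<Psi> y)" using \<Psi>_\<Phi>[OF config_F] .
  finally show ?thesis .
qed

lemma pos_expansive_on_G_iff_F:
  "pos_expansive_on {c. config p n c} G \<longleftrightarrow> pos_expansive_on {c. config p n c} F"
proof -
  obtain r where r: "\<forall>l<n. support_within r (\<alpha> l)"
    using support_within_common laurent_poly_\<alpha> by blast
  show ?thesis
  proof
    assume "pos_expansive_on {c. config p n c} G"
    then show "pos_expansive_on {c. config p n c} F"
      by (rule pos_expansive_on_pullback[OF _ _ _ _ inj_on_\<Phi> has_radius_\<Phi>[OF r]])
        (auto simp: config_F config_\<Phi> \<Phi>_F)
  next
    assume "pos_expansive_on {c. config p n c} F"
    then show "pos_expansive_on {c. config p n c} G"
      by (rule pos_expansive_on_pullback[OF _ _ _ _ inj_on_\<Psi> has_radius_\<Psi>[OF r]])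
        (auto simp: config_G config_\<Psi> \<Psi>_G)
  qed
qed

end

theorem lemma11:
  fixes p :: int and n :: nat and \<alpha> :: "nat \<Rightarrow> laurent"
  assumes "prime p" and "n > 1"
    and "\<forall>i<n. laurent_poly p (\<alpha> i)"
  shows "pos_expansive p n (\<lambda>k l. companion p n (\<lambda>i. lp_neg p (\<alpha> i)) l k)
     \<longleftrightarrow> pos_expansive p n (companion p n (\<lambda>i. lp_neg p (\<alpha> i)))"
proof -
  interpret companion_lca p n \<alpha>
    using assms prime_gt_1_int by unfold_locales auto
  show ?thesis
    using pos_expansive_on_G_iff_F
    unfolding pos_expansive_iff_pos_expansive_on G_def F_def C_def .
qed

end
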